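(* Let $4\le k\le\infty$. Suppose that a simplicial complex $X$ is obtained from two flag simplicial complexes $A$ and $B$ by gluing them along a simplex. Then $X$ is $k$-large if and only if both $A$ and $B$ are $k$-large.
   Context: A simplicial complex is flag if every set of pairwise adjacent vertices spans a simplex. A cycle in a complex is a subcomplex that is a subdivision of the circle; a subcomplex is full if every simplex of the ambient complex spanned by its vertices lies in it. For $4\le k\le\infty$, a flag simplicial complex is $k$-large if it has no full cycle of length $<k$. *)

theory Defs
  imports Main "HOL-Library.Extended_Nat"
begin

text \<open>Abstract simplicial complexes: a set of finite nonempty vertex sets (simplices),
closed under passing to nonempty subsets.  Vertices are the singleton simplices.\<close>
definition simplicial_complex :: "'a set set \<Rightarrow> bool" where
  "simplicial_complex K \<longleftrightarrow>
     (\<forall>s\<in>K. finite s \<and> s \<noteq> {}) \<and> (\<forall>s\<in>K. \<forall>t. t \<subseteq> s \<and> t \<noteq> {} \<longrightarrow> t \<in> K)"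

definition flag :: "'a set set \<Rightarrow> bool" where
  "flag K \<longleftrightarrow> simplicial_complex K \<and>
     (\<forall>s. finite s \<and> s \<noteq> {} \<and> (\<forall>u\<in>s. \<forall>v\<in>s. {u, v} \<in> K) \<longrightarrow> s \<in> K)"

definition is_cycle :: "'a set set \<Rightarrow> nat \<Rightarrow> bool" where
  "is_cycle C n \<longleftrightarrow> (\<exists>f :: nat \<Rightarrow> 'a. 3 \<le> n \<and> inj_on f {..<n} \<and>
     C = {{f i} | i. i < n} \<union> {{f i, f (Suc i mod n)} | i. i < n})"

definition full_subcomplex :: "'a set set \<Rightarrow> 'a set set \<Rightarrow> bool" where
  "full_subcomplex K C \<longleftrightarrow> C \<subseteq> K \<and> (\<forall>s\<in>K. s \<subseteq> \<Union>C \<longrightarrow> s \<in> C)"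

definition k_large :: "'a set set \<Rightarrow> enat \<Rightarrow> bool" where
  "k_large K k \<longleftrightarrow> flag K \<and>
     \<not> (\<exists>C n. is_cycle C n \<and> full_subcomplex K C \<and> enat n < k)"

end

theory Submission
  imports Defs
begin

text \<open>A vertex lying in both A and B lies in the gluing simplex \<sigma>.  So if a full cycle of
  A \<union> B had a vertex outside B and a vertex outside A, each of the two arcs between them
  would have to pass through \<sigma>, since an edge of the cycle lies entirely in A or in B.
  The two vertices of \<sigma> found in this way are joined by an edge of A, which by fullness
  is an edge of the cycle; but they are separated on both sides, a contradiction.  Hence
  every full cycle of A \<union> B lies in A or in B, and fullness transfers in both directions.\<close>

lemma arc_crossing:
  fixes P Q :: "nat \<Rightarrow> bool"
  assumes "\<And>u. i \<le> u \<Longrightarrow> u < j \<Longrightarrow> (P u \<and> P (Suc u)) \<or> (Q u \<and> Q (Suc u))"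
    and "\<not> Q i" and "\<not> P j" and "i < j"
  shows "\<exists>p. i < p \<and> p < j \<and> P p \<and> Q p"
  using assms
proof (induction j)
  case 0
  then show ?case by simp
next
  case (Suc j)
  note edges = Suc.prems(1)
  consider "i = j" | "i < j" "P j" | "i < j" "\<not> P j"
    using \<open>i < Suc j\<close> by linarith
  then show ?case
  proof cases
    case 1
    then show ?thesis using edges[of i] \<open>\<not> Q i\<close> \<open>\<not> P (Suc j)\<close> by simp
  next
    case 2
    then have "Q j" using edges[of j] \<open>\<not> P (Suc j)\<close> by simp
    then show ?thesis using 2 by blast
  next
    case 3
    then obtain p where "i < p" "p < j" "P p" "Q p"
      using Suc.IH edges \<open>\<not> Q i\<close> by (metis less_SucI)
    then show ?thesis using less_SucI by blast
  qed
qed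

lemma cycle_crossing_ordered:
  fixes P Q :: "nat \<Rightarrow> bool"
  assumes edges: "\<And>u. u < n \<Longrightarrow> (P u \<and> P (Suc u mod n)) \<or> (Q u \<and> Q (Suc u mod n))"
    and "i < j" "j < n" "\<not> Q i" "\<not> P j"
  shows "\<exists>p<n. \<exists>q<n. p \<noteq> q \<and> P p \<and> Q p \<and> P q \<and> Q q \<and> (\<forall>w<n. {p, q} \<noteq> {w, Suc w mod n})"
proof -
  have edges_below: "(P u \<and> P (Suc u)) \<or> (Q u \<and> Q (Suc u))" if "u < j" for u
    using edges[of u] that assms(3) by simp
  obtain p where p: "i < p" "p < j" "P p" "Q p"
    using arc_crossing[of i j P Q, OF edges_below] assms(2,4,5) by blast
  have edges_mod: "(Q (u mod n) \<and> Q (Suc u mod n)) \<or> (P (u mod n) \<and> P (Suc u mod n))" for u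
    using edges[of "u mod n"] assms(3) by (auto simp: mod_Suc_eq)
  obtain r where r: "j < r" "r < n + i" "P (r mod n)" "Q (r mod n)"
    using arc_crossing[of j "n + i" "\<lambda>u. Q (u mod n)" "\<lambda>u. P (u mod n)", OF edges_mod]
      assms(2-5) by auto
  define q where "q = r mod n"
  have q_cases: "(q = r \<and> r < n) \<or> (q = r - n \<and> n \<le> r)"
    using r(2) assms(2,3) unfolding q_def by (cases "r < n") (auto simp: le_mod_geq)
  have "\<forall>w<n. {p, q} \<noteq> {w, Suc w mod n}"
  proof (intro allI impI notI)
    fix w assume "w < n" "{p, q} = {w, Suc w mod n}"
    then show False
      using p(1,2) r(1,2) q_cases assms(3) by (auto simp: doubleton_eq_iff mod_Suc split: if_splits)
  qed
  moreover have "p \<noteq> q" using p(1,2) r(1,2) q_cases by auto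
  moreover have "p < n" "q < n" using p(2) assms(3) unfolding q_def by auto
  ultimately show ?thesis using p r unfolding q_def by blast
qed

lemma cycle_crossing:
  fixes P Q :: "nat \<Rightarrow> bool"
  assumes edges: "\<And>u. u < n \<Longrightarrow> (P u \<and> P (Suc u mod n)) \<or> (Q u \<and> Q (Suc u mod n))"
    and "i < n" "j < n" "\<not> Q i" "\<not> P j"
  shows "\<exists>p<n. \<exists>q<n. p \<noteq> q \<and> P p \<and> Q p \<and> P q \<and> Q q \<and> (\<forall>w<n. {p, q} \<noteq> {w, Suc w mod n})"
proof (cases i j rule: linorder_cases)
  case less
  then show ?thesis using cycle_crossing_ordered[of n P Q i j] assms by blast
next
  case equal
  then show ?thesis using edges[of i] assms(2,4,5) by blast
next
  case greater
  then show ?thesis using cycle_crossing_ordered[of n Q P j i] assms by blast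
qed

lemma flagD:
  assumes "flag K" "finite s" "s \<noteq> {}" "\<And>u v. u \<in> s \<Longrightarrow> v \<in> s \<Longrightarrow> {u, v} \<in> K"
  shows "s \<in> K"
  using assms(1) unfolding flag_def
proof (elim conjE allE impE)
  show "finite s \<and> s \<noteq> {} \<and> (\<forall>u\<in>s. \<forall>v\<in>s. {u, v} \<in> K)" using assms(2-4) by blast
qed

lemma simplicial_complex_face:
  "simplicial_complex K \<Longrightarrow> s \<in> K \<Longrightarrow> t \<subseteq> s \<Longrightarrow> t \<noteq> {} \<Longrightarrow> t \<in> K"
  unfolding simplicial_complex_def by blast

lemma simplicial_complex_vertex:
  "simplicial_complex K \<Longrightarrow> s \<in> K \<Longrightarrow> v \<in> s \<Longrightarrow> {v} \<in> K"
  by (rule simplicial_complex_face) auto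

lemma simplicial_complex_Un:
  "simplicial_complex K \<Longrightarrow> simplicial_complex L \<Longrightarrow> simplicial_complex (K \<union> L)"
  unfolding simplicial_complex_def by (metis Un_iff)

lemma full_subcomplexD: "full_subcomplex K C \<Longrightarrow> s \<in> K \<Longrightarrow> s \<subseteq> \<Union>C \<Longrightarrow> s \<in> C"
  unfolding full_subcomplex_def by blast

lemma full_subcomplex_restrict:
  "full_subcomplex K C \<Longrightarrow> C \<subseteq> L \<Longrightarrow> L \<subseteq> K \<Longrightarrow> full_subcomplex L C"
  unfolding full_subcomplex_def by blast

locale glued =
  fixes A B :: "'a set set" and \<sigma> :: "'a set"
  assumes flag_A: "flag A" and flag_B: "flag B"
    and simplex_A: "\<sigma> \<in> A" and simplex_B: "\<sigma> \<in> B"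
    and inter_eq_faces: "A \<inter> B = {\<tau>. \<tau> \<subseteq> \<sigma> \<and> \<tau> \<noteq> {}}"
begin

lemma complex_A: "simplicial_complex A" and complex_B: "simplicial_complex B"
  using flag_A flag_B unfolding flag_def by blast+

lemma common_vertex_in_simplex: "{v} \<in> A \<Longrightarrow> {v} \<in> B \<Longrightarrow> v \<in> \<sigma>"
  using inter_eq_faces by blast

lemma simplex_in_A_if_vertices_in_A:
  assumes "s \<in> A \<union> B" and "\<forall>v\<in>s. {v} \<in> A"
  shows "s \<in> A"
proof (cases "s \<in> A")
  case False
  then have "s \<in> B" using assms(1) by blast
  then have "s \<subseteq> \<sigma>"
    using assms(2) common_vertex_in_simplex simplicial_complex_vertex[OF complex_B] by blast
  moreover have "s \<noteq> {}" using \<open>s \<in> B\<close> complex_B unfolding simplicial_complex_def by blast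
  ultimately show ?thesis using inter_eq_faces by blast
qed

lemma subset_A_if_vertices_in_A:
  assumes "K \<subseteq> A \<union> B" and "\<And>v. v \<in> \<Union>K \<Longrightarrow> {v} \<in> A"
  shows "K \<subseteq> A"
proof
  fix s assume "s \<in> K"
  then show "s \<in> A" using assms by (intro simplex_in_A_if_vertices_in_A) auto
qed

lemma full_subcomplex_Un:
  assumes "full_subcomplex A C"
  shows "full_subcomplex (A \<union> B) C"
  unfolding full_subcomplex_def
proof (intro conjI ballI impI)
  show "C \<subseteq> A \<union> B" using assms unfolding full_subcomplex_def by blast
  fix s assume s: "s \<in> A \<union> B" "s \<subseteq> \<Union>C"
  have "{v} \<in> A" if "v \<in> \<Union>C" for v
    using that assms simplicial_complex_vertex[OF complex_A] unfolding full_subcomplex_def by blast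
  then have "s \<in> A" using s simplex_in_A_if_vertices_in_A by blast
  then show "s \<in> C" using s(2) assms unfolding full_subcomplex_def by blast
qed

end

sublocale glued \<subseteq> swap: glued B A \<sigma>
  by unfold_locales (simp_all add: flag_A flag_B simplex_A simplex_B inter_eq_faces Int_commute)

context glued
begin

lemma flag_Un: "flag (A \<union> B)"
proof -
  have "s \<in> A \<union> B"
    if s: "finite s" "s \<noteq> {}" and edges: "\<forall>u\<in>s. \<forall>v\<in>s. {u, v} \<in> A \<union> B" for s
  proof (cases "\<forall>v\<in>s. {v} \<in> A")
    case True
    have "s \<in> A"
      using flag_A s by (rule flagD) (use edges True in \<open>auto intro: simplex_in_A_if_vertices_in_A\<close>)
    then show ?thesis ..
  next
    case False
    then obtain u where u: "u \<in> s" "{u} \<notin> A" by blast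
    have vertices_B: "{v} \<in> B" if "v \<in> s" for v
    proof -
      have "{u, v} \<in> A \<union> B" using edges u(1) that by blast
      moreover have "{u, v} \<notin> A" using u(2) simplicial_complex_vertex[OF complex_A, of "{u, v}" u] by blast
      ultimately show ?thesis using simplicial_complex_vertex[OF complex_B, of "{u, v}" v] by blast
    qed
    have "s \<in> B"
      using flag_B s by (rule flagD)
        (use edges vertices_B in \<open>auto intro: swap.simplex_in_A_if_vertices_in_A\<close>)
    then show ?thesis ..
  qed
  then show ?thesis
    using simplicial_complex_Un[OF complex_A complex_B] unfolding flag_def by blast
qed

lemma full_cycle_in_A_or_B:
  assumes cycle: "is_cycle C n" and full: "full_subcomplex (A \<union> B) C"
  shows "C \<subseteq> A \<or> C \<subseteq> B"
proof (rule ccontr)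
  assume not_in: "\<not> (C \<subseteq> A \<or> C \<subseteq> B)"
  obtain f where "3 \<le> n" and inj: "inj_on f {..<n}"
    and C_eq: "C = {{f i} | i. i < n} \<union> {{f i, f (Suc i mod n)} | i. i < n}"
    using cycle unfolding is_cycle_def by blast
  have C_sub: "C \<subseteq> A \<union> B" and C_sub': "C \<subseteq> B \<union> A"
    using full unfolding full_subcomplex_def by blast+
  have vertex_index: "\<exists>u<n. v = f u" if "v \<in> \<Union>C" for v
  proof -
    have "Suc i mod n < n" for i using \<open>3 \<le> n\<close> by simp
    then show ?thesis using that C_eq by auto
  qed
  have "\<not> (\<forall>u<n. {f u} \<in> B)"
    using swap.subset_A_if_vertices_in_A[OF C_sub'] vertex_index not_in by blast
  then obtain i where "i < n" "{f i} \<notin> B" by blast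
  have "\<not> (\<forall>u<n. {f u} \<in> A)"
    using subset_A_if_vertices_in_A[OF C_sub] vertex_index not_in by blast
  then obtain j where "j < n" "{f j} \<notin> A" by blast
  have edges: "({f u} \<in> A \<and> {f (Suc u mod n)} \<in> A) \<or> ({f u} \<in> B \<and> {f (Suc u mod n)} \<in> B)"
    if "u < n" for u
  proof -
    have "{f u, f (Suc u mod n)} \<in> A \<union> B" using that C_eq C_sub by blast
    then show ?thesis
      using simplicial_complex_vertex[OF complex_A, of "{f u, f (Suc u mod n)}"]
        simplicial_complex_vertex[OF complex_B, of "{f u, f (Suc u mod n)}"] by blast
  qed
  have "\<exists>p<n. \<exists>q<n. p \<noteq> q \<and> {f p} \<in> A \<and> {f p} \<in> B \<and> {f q} \<in> A \<and> {f q} \<in> B \<and>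
      (\<forall>w<n. {p, q} \<noteq> {w, Suc w mod n})"
    by (rule cycle_crossing[of n "\<lambda>u. {f u} \<in> A" "\<lambda>u. {f u} \<in> B" i j]) (erule edges, fact+)
  then obtain p q where pq: "p < n" "q < n" "p \<noteq> q" "{f p} \<in> A" "{f p} \<in> B" "{f q} \<in> A" "{f q} \<in> B"
    and not_adjacent: "\<forall>w<n. {p, q} \<noteq> {w, Suc w mod n}"
    by blast
  \<comment> \<open>two vertices of \<sigma> span an edge of A, which fullness puts into the cycle\<close>
  have "f p \<in> \<sigma>" "f q \<in> \<sigma>" using pq(4-7) common_vertex_in_simplex by simp_all
  then have "{f p, f q} \<in> A" by (intro simplicial_complex_face[OF complex_A simplex_A]) simp_all
  moreover have "{f p} \<in> C" "{f q} \<in> C" using pq(1,2) C_eq by blast+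
  then have "{f p, f q} \<subseteq> \<Union>C" by blast
  ultimately have "{f p, f q} \<in> C" using full_subcomplexD[OF full] by blast
  moreover have "f p \<noteq> f q" using inj pq(1-3) by (auto dest: inj_onD)
  ultimately have "{f p, f q} \<in> {{f w, f (Suc w mod n)} | w. w < n}"
    using C_eq by (auto simp: doubleton_eq_iff)
  then obtain w where w: "w < n" "f ` {p, q} = f ` {w, Suc w mod n}" by auto
  have "{p, q} \<subseteq> {..<n}" "{w, Suc w mod n} \<subseteq> {..<n}" using pq(1,2) w(1) by auto
  then have "{p, q} = {w, Suc w mod n}" using inj_on_image_eq_iff[OF inj] w(2) by metis
  then show False using not_adjacent w(1) by blast
qed

lemma full_cycle_iff:
  assumes "is_cycle C n"
  shows "full_subcomplex (A \<union> B) C \<longleftrightarrow> full_subcomplex A C \<or> full_subcomplex B C"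
proof
  assume full: "full_subcomplex (A \<union> B) C"
  then show "full_subcomplex A C \<or> full_subcomplex B C"
    using full_cycle_in_A_or_B[OF assms] full_subcomplex_restrict[OF full] by blast
next
  assume "full_subcomplex A C \<or> full_subcomplex B C"
  then show "full_subcomplex (A \<union> B) C"
    using full_subcomplex_Un swap.full_subcomplex_Un by (metis sup_commute)
qed

lemma k_large_Un_iff: "k_large (A \<union> B) k \<longleftrightarrow> k_large A k \<and> k_large B k"
  unfolding k_large_def using flag_A flag_B flag_Un full_cycle_iff by blast

end

theorem lemma2p3:
  fixes A B :: "'a set set" and \<sigma> :: "'a set" and k :: enat
  assumes "4 \<le> k"
    and "flag A" and "flag B"
    and "\<sigma> \<in> A" and "\<sigma> \<in> B"
    and "A \<inter> B = {\<tau>. \<tau> \<subseteq> \<sigma> \<and> \<tau> \<noteq> {}}"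
  shows "k_large (A \<union> B) k \<longleftrightarrow> k_large A k \<and> k_large B k"
  using assms(2-6) by (intro glued.k_large_Un_iff glued.intro)

end
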